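(* Let $\lambda>0$, let $E_1,E_2,\ldots$ be i.i.d. exponential random variables with rate $\lambda$ (i.e. $\text{Exp}(\lambda)$, mean $1/\lambda$), and let $$X=\prod_{i=1}^{\infty}\min\left\{\sum_{k=1}^iE_k,1\right\}.$$ Then $$X\overset{d}{=}\prod_{i=1}^N U_i,$$ where $N\sim\text{Pois}(\lambda)$, $(U_i)_{i\in\mathbb{N}}$ is an i.i.d. sequence of $\text{U}(0,1)$ random variables independent of $N$, and the product is understood to equal $1$ if $N=0$.
   Context: $\overset{d}{=}$ denotes equality in distribution. $\text{Pois}(\lambda)$ is the Poisson distribution with mean $\lambda$, and $\text{U}(0,1)$ is the uniform distribution on $(0,1)$. *)

theory Defs
  imports "HOL-Probability.Probability"
begin

(* The infinite product  prod_{i>=1} min(sum_{k=1}^i E_k, 1), read as the limit of the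
   partial products (indices shifted to start at 0). *)
definition prod_min_partial_sums :: "(nat \<Rightarrow> real) \<Rightarrow> real" where
  "prod_min_partial_sums e = lim (\<lambda>n. \<Prod>i<n. min (\<Sum>k\<le>i. e k) 1)"

end

(*
  Both laws are mixtures, with Poisson(l) weights, of the laws nu_n of products of n independent
  U(0,1) variables; for the right-hand side this is just conditioning on N.

  On the left, let S_k = E_1 + ... + E_k and let n be the number of partial sums that do not
  exceed 1, so that X = S_1 ... S_n. By induction on k, S_k has the Erlang density
  l^k t^(k-1) e^(-l t) / (k-1)! and, given S_k = t, the product S_1 ... S_k is t^k times an
  independent nu_(k-1) variable, because given S_(k+1) = r the ratio (S_k / r)^k is uniform on
  (0,1). Weighting with the overshoot probability P(E_(n+1) > 1 - t) = e^(-l (1 - t)) and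
  integrating over t in [0,1] turns the Erlang density into e^(-l) l^n / n! times n t^(n-1), the
  density of a variable whose n-th power is uniform; hence X, restricted to this event, has
  e^(-l) l^n / n! times the law nu_n.
*)
theory Submission
  imports Defs
begin

section \<open>Products of independent uniform variables\<close>

abbreviation unit_uniform :: "real measure" where
  "unit_uniform \<equiv> uniform_measure lborel {0<..<1}"

lemma nn_integral_unit_uniform:
  assumes [measurable]: "f \<in> borel_measurable borel"
  shows "(\<integral>\<^sup>+x. f x \<partial>unit_uniform) = (\<integral>\<^sup>+x. indicator {0..1} x * f x \<partial>lborel)"
proof -
  have "(\<integral>\<^sup>+x. f x \<partial>unit_uniform) = (\<integral>\<^sup>+x. indicator {0<..<1} x * f x \<partial>lborel)"
    by (subst nn_integral_uniform_measure) (auto simp: divide_ennreal_def mult.commute)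
  also have "\<dots> = (\<integral>\<^sup>+x. indicator {0..1} x * f x \<partial>lborel)"
  proof (rule nn_integral_cong_AE)
    have "AE x in lborel. x \<notin> {0, 1}"
      by (rule AE_discrete_difference) auto
    then show "AE x in lborel. indicator {0<..<1} x * f x = indicator {0..1} x * f x"
      by eventually_elim (auto split: split_indicator)
  qed
  finally show ?thesis .
qed

primrec prod_uniform_measure :: "nat \<Rightarrow> real measure" where
  "prod_uniform_measure 0 = return borel 1"
| "prod_uniform_measure (Suc n) =
     distr (unit_uniform \<Otimes>\<^sub>M prod_uniform_measure n) borel (\<lambda>(w, p). w * p)"

lemma sets_prod_uniform_measure [measurable_cong, simp]: "sets (prod_uniform_measure n) = sets borel"
  by (cases n) auto

lemma prob_space_prod_uniform_measure: "prob_space (prod_uniform_measure n)"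
proof (induction n)
  case 0
  then show ?case by (simp add: prob_space_return)
next
  case (Suc n)
  interpret U: prob_space unit_uniform
    by (rule prob_space_uniform_measure) auto
  interpret V: prob_space "prod_uniform_measure n" by (rule Suc)
  interpret UV: pair_prob_space unit_uniform "prod_uniform_measure n" ..
  show ?case by (simp add: UV.prob_space_distr)
qed

lemma measurable_nn_integral_prod_uniform_measure [measurable (raw)]:
  assumes "case_prod f \<in> borel_measurable (N \<Otimes>\<^sub>M borel)"
  shows "(\<lambda>x. \<integral>\<^sup>+y. f x y \<partial>prod_uniform_measure n) \<in> borel_measurable N"
proof -
  interpret prob_space "prod_uniform_measure n" by (rule prob_space_prod_uniform_measure)
  have "sets (N \<Otimes>\<^sub>M prod_uniform_measure n) = sets (N \<Otimes>\<^sub>M borel)"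
    by (rule sets_pair_measure_cong) auto
  with assms show ?thesis
    by (intro borel_measurable_nn_integral) (simp cong: measurable_cong_sets)
qed

lemma nn_integral_prod_uniform_measure_0:
  "g \<in> borel_measurable borel \<Longrightarrow> (\<integral>\<^sup>+p. g p \<partial>prod_uniform_measure 0) = g 1"
  by (simp add: nn_integral_return)

lemma nn_integral_prod_uniform_measure_Suc:
  assumes [measurable]: "g \<in> borel_measurable borel"
  shows "(\<integral>\<^sup>+p. g p \<partial>prod_uniform_measure (Suc n))
       = (\<integral>\<^sup>+w. indicator {0..1} w * (\<integral>\<^sup>+p. g (w * p) \<partial>prod_uniform_measure n) \<partial>lborel)"
proof -
  interpret prob_space "prod_uniform_measure n" by (rule prob_space_prod_uniform_measure)
  have "(\<integral>\<^sup>+p. g p \<partial>prod_uniform_measure (Suc n))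
      = (\<integral>\<^sup>+x. g (fst x * snd x) \<partial>(unit_uniform \<Otimes>\<^sub>M prod_uniform_measure n))"
    by (simp add: nn_integral_distr case_prod_beta)
  also have "\<dots> = (\<integral>\<^sup>+w. (\<integral>\<^sup>+p. g (w * p) \<partial>prod_uniform_measure n) \<partial>unit_uniform)"
    by (subst nn_integral_fst[symmetric]) auto
  also have "\<dots> = (\<integral>\<^sup>+w. indicator {0..1} w * (\<integral>\<^sup>+p. g (w * p) \<partial>prod_uniform_measure n) \<partial>lborel)"
    by (rule nn_integral_unit_uniform) measurable
  finally show ?thesis .
qed

lemma nn_integral_power_substitution:
  assumes r: "0 < r" and [measurable]: "F \<in> borel_measurable borel"
  shows "(\<integral>\<^sup>+t. indicator {0..r} t * ennreal (real (Suc n) * t ^ n / r ^ Suc n) * F ((t / r) ^ Suc n) \<partial>lborel)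
       = (\<integral>\<^sup>+w. indicator {0..1} w * F w \<partial>lborel)"
proof -
  have "((\<lambda>t. (t / r) ^ Suc n) has_real_derivative real (Suc n) * t ^ n / r ^ Suc n) (at t)" for t
    using DERIV_cdivide[OF DERIV_pow[of "Suc n" t], of "r ^ Suc n"] by (simp add: power_divide)
  moreover have "continuous_on {0..r} (\<lambda>t. real (Suc n) * t ^ n / r ^ Suc n)"
    using r by (intro continuous_intros) auto
  ultimately have "(\<integral>\<^sup>+w. F w * indicator {(0 / r) ^ Suc n..(r / r) ^ Suc n} w \<partial>lborel)
     = (\<integral>\<^sup>+t. F ((t / r) ^ Suc n) * ennreal (real (Suc n) * t ^ n / r ^ Suc n) * indicator {0..r} t \<partial>lborel)"
    using r by (intro nn_integral_substitution_aux) auto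
  with r show ?thesis
    by (simp add: mult_ac)
qed

lemma nn_integral_prod_uniform_measure_Suc_scaled:
  assumes r: "0 < r" and [measurable]: "G \<in> borel_measurable borel"
  shows "(\<integral>\<^sup>+q. G (r ^ Suc n * q) \<partial>prod_uniform_measure (Suc n))
       = (\<integral>\<^sup>+t. indicator {0..r} t * ennreal (real (Suc n) * t ^ n / r ^ Suc n)
                * (\<integral>\<^sup>+p. G (t ^ Suc n * p) \<partial>prod_uniform_measure n) \<partial>lborel)"
proof -
  define F where "F w = (\<integral>\<^sup>+p. G (r ^ Suc n * (w * p)) \<partial>prod_uniform_measure n)" for w
  have [measurable]: "F \<in> borel_measurable borel"
    unfolding F_def by measurable
  have "F ((t / r) ^ Suc n) = (\<integral>\<^sup>+p. G (t ^ Suc n * p) \<partial>prod_uniform_measure n)" for t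
    using r by (simp add: F_def power_divide)
  then have "(\<integral>\<^sup>+t. indicator {0..r} t * ennreal (real (Suc n) * t ^ n / r ^ Suc n)
                * (\<integral>\<^sup>+p. G (t ^ Suc n * p) \<partial>prod_uniform_measure n) \<partial>lborel)
      = (\<integral>\<^sup>+w. indicator {0..1} w * F w \<partial>lborel)"
    using nn_integral_power_substitution[OF r, of F n] by simp
  also have "\<dots> = (\<integral>\<^sup>+q. G (r ^ Suc n * q) \<partial>prod_uniform_measure (Suc n))"
    unfolding F_def by (rule nn_integral_prod_uniform_measure_Suc[symmetric]) measurable
  finally show ?thesis ..
qed

section \<open>Exponential and Erlang densities\<close>

abbreviation exponential_measure :: "real \<Rightarrow> real measure" where
  "exponential_measure l \<equiv> density lborel (exponential_density l)"

lemma product_prob_space_exponential_measure: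
  "0 < l \<Longrightarrow> product_prob_space (\<lambda>_. exponential_measure l)"
  by (intro product_prob_spaceI prob_space_exponential_density)

lemma emeasure_exponential_measure_greaterThan:
  assumes "0 < l" "0 \<le> a"
  shows "emeasure (exponential_measure l) {a<..} = exp (- l * a)"
proof -
  interpret prob_space "exponential_measure l"
    using assms(1) by (rule prob_space_exponential_density)
  have "emeasure (exponential_measure l) (space (exponential_measure l) - {..a})
      = 1 - emeasure (exponential_measure l) {..a}"
    using emeasure_space_1 by (subst emeasure_compl) auto
  moreover have "space (exponential_measure l) - {..a} = {a<..}"
    by auto
  ultimately have "emeasure (exponential_measure l) {a<..} = 1 - emeasure (exponential_measure l) {..a}"
    by simp
  also have "\<dots> = exp (- l * a)"
    using assms by (simp add: emeasure_erlang_density erlang_CDF_0 ennreal_1[symmetric] ennreal_minus del: ennreal_1)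
  finally show ?thesis .
qed

lemma nn_integral_exponential_measure_shift:
  assumes [measurable]: "f \<in> borel_measurable borel"
  shows "(\<integral>\<^sup>+y. f (s + y) \<partial>exponential_measure l)
       = (\<integral>\<^sup>+r. ennreal (exponential_density l (r - s)) * f r \<partial>lborel)"
proof -
  have "(\<integral>\<^sup>+r. ennreal (exponential_density l (r - s)) * f r \<partial>lborel)
      = (\<integral>\<^sup>+y. ennreal (exponential_density l y) * f (s + y) \<partial>lborel)"
    using nn_integral_real_affine[of "\<lambda>r. ennreal (exponential_density l (r - s)) * f r" 1 s]
    by simp
  then show ?thesis
    by (simp add: nn_integral_density)
qed

lemma erlang_density_mult_exponential_density:
  assumes "r \<noteq> 0"
  shows "erlang_density n l t * exponential_density l (r - t)
       = erlang_density (Suc n) l r * (indicator {0..r} t * (real (Suc n) * t ^ n / r ^ Suc n))"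
proof (cases "0 \<le> t \<and> t \<le> r")
  case True
  with assms have "0 < r" by auto
  have "exp (- l * t) * exp (- (r - t) * l) = exp (- l * r)"
    by (simp add: exp_add[symmetric] algebra_simps)
  then have "erlang_density n l t * exponential_density l (r - t) = l ^ Suc (Suc n) * t ^ n * exp (- l * r) / fact n"
    using True by (simp add: erlang_density_def field_simps)
  also have "\<dots> = erlang_density (Suc n) l r * (real (Suc n) * t ^ n / r ^ Suc n)"
    using \<open>0 < r\<close> by (simp add: erlang_density_def fact_Suc field_simps del: of_nat_Suc)
  finally show ?thesis
    using True by simp
next
  case False
  then show ?thesis
    by (auto simp: erlang_density_def)
qed

lemma erlang_density_mult_exp_eq_pmf_poisson:
  assumes "0 < l" "0 \<le> t"
  shows "erlang_density m l t * exp (- l * (1 - t)) = pmf (poisson_pmf l) (Suc m) * (real (Suc m) * t ^ m)"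
proof -
  have "exp (- l * t) * exp (- l * (1 - t)) = exp (- l)"
    by (simp add: exp_add[symmetric] algebra_simps)
  with assms show ?thesis
    by (simp add: erlang_density_def field_simps del: of_nat_Suc)
qed

lemma nn_integral_erlang_mult_exponential_density:
  assumes l: "0 < l" and "r \<noteq> 0" and [measurable]: "f \<in> borel_measurable borel"
  shows "(\<integral>\<^sup>+t. ennreal (erlang_density n l t * exponential_density l (r - t)) * f t \<partial>lborel)
       = ennreal (erlang_density (Suc n) l r)
           * (\<integral>\<^sup>+t. indicator {0..r} t * ennreal (real (Suc n) * t ^ n / r ^ Suc n) * f t \<partial>lborel)"
proof (cases "0 < r")
  case True
  have "ennreal (erlang_density n l t * exponential_density l (r - t)) * f t
      = ennreal (erlang_density (Suc n) l r)
          * (indicator {0..r} t * ennreal (real (Suc n) * t ^ n / r ^ Suc n) * f t)" for t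
  proof (cases "t \<in> {0..r}")
    case t: True
    have "0 \<le> erlang_density (Suc n) l r"
      using l by simp
    moreover have "erlang_density n l t * exponential_density l (r - t)
        = erlang_density (Suc n) l r * (real (Suc n) * t ^ n / r ^ Suc n)"
      using erlang_density_mult_exponential_density[of r n l t] True t by simp
    ultimately show ?thesis
      using t by (simp only: ennreal_mult' indicator_simps mult_1 mult.assoc)
  next
    case False
    with True show ?thesis
      by (simp add: erlang_density_mult_exponential_density)
  qed
  then show ?thesis
    by (simp add: nn_integral_cmult)
next
  case False
  then have "erlang_density (Suc n) l r = 0"
    by (simp add: erlang_density_def)
  moreover from this assms have zero: "erlang_density n l t * exponential_density l (r - t) = 0" for t
    by (simp add: erlang_density_mult_exponential_density)
  ultimately show ?thesis
    unfolding zero by simp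
qed

text \<open>If T has the Erlang(n+1) law and Y is an independent exponential variable, then given
  T + Y = r the ratio (T / r)^(n+1) is uniform on (0,1).\<close>

lemma nn_integral_erlang_exponential_convolution:
  fixes \<phi> :: "real \<Rightarrow> real \<Rightarrow> ennreal"
  assumes l: "0 < l" and [measurable]: "case_prod \<phi> \<in> borel_measurable (borel \<Otimes>\<^sub>M borel)"
  shows "(\<integral>\<^sup>+t. ennreal (erlang_density n l t) * (\<integral>\<^sup>+p. (\<integral>\<^sup>+r. ennreal (exponential_density l (r - t))
              * \<phi> r (t ^ Suc n * p * r) \<partial>lborel) \<partial>prod_uniform_measure n) \<partial>lborel)
       = (\<integral>\<^sup>+r. ennreal (erlang_density (Suc n) l r)
              * (\<integral>\<^sup>+q. \<phi> r (r ^ Suc (Suc n) * q) \<partial>prod_uniform_measure (Suc n)) \<partial>lborel)"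
proof -
  interpret lborel_nu: pair_sigma_finite lborel "prod_uniform_measure n"
    by (simp add: pair_sigma_finite_def lborel.sigma_finite_measure_axioms
        prob_space_imp_sigma_finite prob_space_prod_uniform_measure)
  define \<Phi> where "\<Phi> t r = (\<integral>\<^sup>+p. \<phi> r (t ^ Suc n * p * r) \<partial>prod_uniform_measure n)" for t r
  have [measurable]: "case_prod \<Phi> \<in> borel_measurable (borel \<Otimes>\<^sub>M borel)"
    unfolding \<Phi>_def by measurable
  have "(\<integral>\<^sup>+p. (\<integral>\<^sup>+r. ennreal (exponential_density l (r - t)) * \<phi> r (t ^ Suc n * p * r) \<partial>lborel)
          \<partial>prod_uniform_measure n)
      = (\<integral>\<^sup>+r. (\<integral>\<^sup>+p. ennreal (exponential_density l (r - t)) * \<phi> r (t ^ Suc n * p * r)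
          \<partial>prod_uniform_measure n) \<partial>lborel)" for t
    by (rule lborel_nu.Fubini') measurable
  also have "\<dots> t = (\<integral>\<^sup>+r. ennreal (exponential_density l (r - t)) * \<Phi> t r \<partial>lborel)" for t
    unfolding \<Phi>_def by (intro nn_integral_cong nn_integral_cmult) measurable
  finally have "(\<integral>\<^sup>+t. ennreal (erlang_density n l t) * (\<integral>\<^sup>+p. (\<integral>\<^sup>+r. ennreal (exponential_density l (r - t))
              * \<phi> r (t ^ Suc n * p * r) \<partial>lborel) \<partial>prod_uniform_measure n) \<partial>lborel)
      = (\<integral>\<^sup>+t. (\<integral>\<^sup>+r. ennreal (erlang_density n l t * exponential_density l (r - t)) * \<Phi> t r \<partial>lborel) \<partial>lborel)"
    using l by (simp add: nn_integral_cmult[symmetric] ennreal_mult mult.assoc)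
  also have "\<dots> = (\<integral>\<^sup>+r. (\<integral>\<^sup>+t. ennreal (erlang_density n l t * exponential_density l (r - t)) * \<Phi> t r \<partial>lborel) \<partial>lborel)"
    by (rule lborel_pair.Fubini'[symmetric]) measurable
  also have "\<dots> = (\<integral>\<^sup>+r. ennreal (erlang_density (Suc n) l r)
                     * (\<integral>\<^sup>+q. \<phi> r (r ^ Suc (Suc n) * q) \<partial>prod_uniform_measure (Suc n)) \<partial>lborel)"
  proof (rule nn_integral_cong_AE)
    show "AE r in lborel. (\<integral>\<^sup>+t. ennreal (erlang_density n l t * exponential_density l (r - t)) * \<Phi> t r \<partial>lborel)
        = ennreal (erlang_density (Suc n) l r) * (\<integral>\<^sup>+q. \<phi> r (r ^ Suc (Suc n) * q) \<partial>prod_uniform_measure (Suc n))"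
      using AE_lborel_singleton[of 0]
    proof eventually_elim
      case (elim r)
      have "(\<integral>\<^sup>+t. ennreal (erlang_density n l t * exponential_density l (r - t)) * \<Phi> t r \<partial>lborel)
          = ennreal (erlang_density (Suc n) l r)
              * (\<integral>\<^sup>+t. indicator {0..r} t * ennreal (real (Suc n) * t ^ n / r ^ Suc n) * \<Phi> t r \<partial>lborel)"
        using l elim by (rule nn_integral_erlang_mult_exponential_density) measurable
      also have "\<dots> = ennreal (erlang_density (Suc n) l r)
          * (\<integral>\<^sup>+q. \<phi> r (r ^ Suc (Suc n) * q) \<partial>prod_uniform_measure (Suc n))"
      proof (cases "0 < r")
        case True
        show ?thesis
          unfolding \<Phi>_def using nn_integral_prod_uniform_measure_Suc_scaled[OF True, of "\<lambda>y. \<phi> r (y * r)" n]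
          by (simp add: mult_ac)
      qed (simp add: erlang_density_def)
      finally show ?case .
    qed
  qed
  finally show ?thesis .
qed

section \<open>Partial sums of independent exponential variables\<close>

definition partial_sum :: "(nat \<Rightarrow> real) \<Rightarrow> nat \<Rightarrow> real" where
  "partial_sum x i = (\<Sum>k\<le>i. x k)"

definition partial_sum_prod :: "(nat \<Rightarrow> real) \<Rightarrow> nat \<Rightarrow> real" where
  "partial_sum_prod x n = (\<Prod>i<n. partial_sum x i)"

lemma partial_sum_Suc: "partial_sum x (Suc i) = partial_sum x i + x (Suc i)"
  by (simp add: partial_sum_def)

lemma partial_sum_prod_Suc: "partial_sum_prod x (Suc n) = partial_sum_prod x n * partial_sum x n"
  by (simp add: partial_sum_prod_def)

lemma partial_sum_fun_upd: "i < m \<Longrightarrow> partial_sum (x(m := y)) i = partial_sum x i"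
  unfolding partial_sum_def by (intro sum.cong) auto

lemma partial_sum_prod_fun_upd: "n \<le> m \<Longrightarrow> partial_sum_prod (x(m := y)) n = partial_sum_prod x n"
  unfolding partial_sum_prod_def by (intro prod.cong) (auto simp: partial_sum_fun_upd)

lemma measurable_partial_sum [measurable]:
  assumes "{..i} \<subseteq> I" "sets M = sets borel"
  shows "(\<lambda>x. partial_sum x i) \<in> borel_measurable (PiM I (\<lambda>_. M))"
  unfolding partial_sum_def
proof (rule borel_measurable_sum)
  fix k assume "k \<in> {..i}"
  with assms(1) have "(\<lambda>x. x k) \<in> measurable (PiM I (\<lambda>_. M)) M"
    by (intro measurable_component_singleton) auto
  with assms(2) show "(\<lambda>x. x k) \<in> borel_measurable (PiM I (\<lambda>_. M))"
    by (simp cong: measurable_cong_sets)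
qed

lemma measurable_partial_sum_prod [measurable]:
  assumes "{..<n} \<subseteq> I" "sets M = sets borel"
  shows "(\<lambda>x. partial_sum_prod x n) \<in> borel_measurable (PiM I (\<lambda>_. M))"
  unfolding partial_sum_prod_def
  using assms by (intro borel_measurable_prod measurable_partial_sum) auto

lemma nn_integral_exponential_partial_sums:
  fixes \<phi> :: "real \<Rightarrow> real \<Rightarrow> ennreal"
  assumes l: "0 < l" and "case_prod \<phi> \<in> borel_measurable (borel \<Otimes>\<^sub>M borel)"
  shows "(\<integral>\<^sup>+x. \<phi> (partial_sum x n) (partial_sum_prod x (Suc n)) \<partial>PiM {..n} (\<lambda>_. exponential_measure l))
       = (\<integral>\<^sup>+t. ennreal (erlang_density n l t) * (\<integral>\<^sup>+p. \<phi> t (t ^ Suc n * p) \<partial>prod_uniform_measure n) \<partial>lborel)"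
  using assms(2)
proof (induction n arbitrary: \<phi>)
  case 0
  note [measurable] = 0
  interpret product_prob_space "\<lambda>_. exponential_measure l" "{}"
    using l by (rule product_prob_space_exponential_measure)
  have "(\<integral>\<^sup>+x. \<phi> (partial_sum x 0) (partial_sum_prod x (Suc 0)) \<partial>PiM {..0} (\<lambda>_. exponential_measure l))
      = (\<integral>\<^sup>+x. \<phi> (x 0) (x 0) \<partial>PiM {0::nat} (\<lambda>_. exponential_measure l))"
    by (simp add: partial_sum_def partial_sum_prod_def)
  also have "\<dots> = (\<integral>\<^sup>+t. \<phi> t t \<partial>exponential_measure l)"
    by (rule product_nn_integral_singleton[where f = "\<lambda>t. \<phi> t t"]) measurable
  also have "\<dots> = (\<integral>\<^sup>+t. ennreal (erlang_density 0 l t) * (\<integral>\<^sup>+p. \<phi> t (t ^ Suc 0 * p) \<partial>prod_uniform_measure 0) \<partial>lborel)"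
  proof -
    have "(\<integral>\<^sup>+p. \<phi> t (t ^ Suc 0 * p) \<partial>prod_uniform_measure 0) = \<phi> t t" for t
      by (subst nn_integral_prod_uniform_measure_0) auto
    then show ?thesis
      by (simp add: nn_integral_density)
  qed
  finally show ?case .
next
  case (Suc n)
  note [measurable] = Suc.prems
  interpret product_prob_space "\<lambda>_. exponential_measure l" "{}"
    using l by (rule product_prob_space_exponential_measure)
  define \<psi> where "\<psi> s q = (\<integral>\<^sup>+r. ennreal (exponential_density l (r - s)) * \<phi> r (q * r) \<partial>lborel)" for s q
  have [measurable]: "case_prod \<psi> \<in> borel_measurable (borel \<Otimes>\<^sub>M borel)"
    unfolding \<psi>_def by measurable
  have [measurable]:
    "(\<lambda>x. partial_sum x (Suc n)) \<in> borel_measurable (PiM (insert (Suc n) {..n}) (\<lambda>_. exponential_measure l))"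
    "(\<lambda>x. partial_sum_prod x (Suc (Suc n))) \<in> borel_measurable (PiM (insert (Suc n) {..n}) (\<lambda>_. exponential_measure l))"
    by (auto intro: measurable_partial_sum measurable_partial_sum_prod)
  have "(\<integral>\<^sup>+x. \<phi> (partial_sum x (Suc n)) (partial_sum_prod x (Suc (Suc n))) \<partial>PiM {..Suc n} (\<lambda>_. exponential_measure l))
      = (\<integral>\<^sup>+x. (\<integral>\<^sup>+y. \<phi> (partial_sum (x(Suc n := y)) (Suc n)) (partial_sum_prod (x(Suc n := y)) (Suc (Suc n)))
               \<partial>exponential_measure l) \<partial>PiM {..n} (\<lambda>_. exponential_measure l))"
    unfolding atMost_Suc by (rule product_nn_integral_insert) auto
  also have "\<dots> = (\<integral>\<^sup>+x. \<psi> (partial_sum x n) (partial_sum_prod x (Suc n)) \<partial>PiM {..n} (\<lambda>_. exponential_measure l))"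
    unfolding \<psi>_def
    by (intro nn_integral_cong)
      (simp add: partial_sum_Suc partial_sum_prod_Suc[of _ "Suc n"] partial_sum_fun_upd
        partial_sum_prod_fun_upd nn_integral_exponential_measure_shift[where f = "\<lambda>r. \<phi> r (_ * r)"])
  also have "\<dots> = (\<integral>\<^sup>+t. ennreal (erlang_density n l t) * (\<integral>\<^sup>+p. \<psi> t (t ^ Suc n * p) \<partial>prod_uniform_measure n) \<partial>lborel)"
    by (rule Suc.IH) measurable
  also have "\<dots> = (\<integral>\<^sup>+r. ennreal (erlang_density (Suc n) l r)
                     * (\<integral>\<^sup>+q. \<phi> r (r ^ Suc (Suc n) * q) \<partial>prod_uniform_measure (Suc n)) \<partial>lborel)"
    unfolding \<psi>_def using l by (rule nn_integral_erlang_exponential_convolution) measurable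
  finally show ?case .
qed

definition first_passage :: "nat \<Rightarrow> (nat \<Rightarrow> real) \<Rightarrow> bool" where
  "first_passage n x \<longleftrightarrow> (\<forall>i<n. partial_sum x i \<le> 1) \<and> 1 < partial_sum x n"

lemma partial_sum_mono: "(\<And>k. 0 \<le> x k) \<Longrightarrow> i \<le> j \<Longrightarrow> partial_sum x i \<le> partial_sum x j"
  unfolding partial_sum_def by (rule sum_mono2) auto

lemma first_passage_unique: "first_passage n x \<Longrightarrow> first_passage m x \<Longrightarrow> n = m"
  unfolding first_passage_def by (metis linorder_neqE_nat not_less)

lemma first_passage_iff:
  assumes "\<And>k. 0 \<le> x k"
  shows "first_passage n x \<longleftrightarrow> (n = 0 \<or> partial_sum x (n - 1) \<le> 1) \<and> 1 < partial_sum x n"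
proof (cases n)
  case (Suc m)
  have "(\<forall>i<Suc m. partial_sum x i \<le> 1) \<longleftrightarrow> partial_sum x m \<le> 1"
    using partial_sum_mono[OF assms] by (meson order_trans less_Suc_eq_le lessI)
  with Suc show ?thesis
    by (simp add: first_passage_def)
qed (simp add: first_passage_def)

lemma prod_min_partial_sums_first_passage:
  assumes nonneg: "\<And>k. 0 \<le> x k" and "first_passage n x"
  shows "prod_min_partial_sums x = partial_sum_prod x n"
proof -
  have "(\<Prod>i<N. min (partial_sum x i) 1) = partial_sum_prod x n" if "n \<le> N" for N
  proof -
    have "min (partial_sum x i) 1 = (if i < n then partial_sum x i else 1)" for i
      using \<open>first_passage n x\<close> partial_sum_mono[of x n i, OF nonneg]
      by (auto simp: first_passage_def)
    then have "(\<Prod>i<N. min (partial_sum x i) 1) = (\<Prod>i\<in>{..<N} \<inter> {i. i < n}. partial_sum x i)"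
      by (simp add: prod.If_cases)
    also have "{..<N} \<inter> {i. i < n} = {..<n}"
      using that by auto
    finally show ?thesis
      by (simp add: partial_sum_prod_def)
  qed
  then have "(\<lambda>N. \<Prod>i<N. min (partial_sum x i) 1) \<longlonglongrightarrow> partial_sum_prod x n"
    by (intro tendsto_eventually eventually_sequentiallyI)
  then show ?thesis
    unfolding prod_min_partial_sums_def partial_sum_def[symmetric] by (rule limI)
qed

lemma nn_integral_exponential_overshoot:
  assumes l: "0 < l" and [measurable]: "g \<in> borel_measurable borel"
  shows "(\<integral>\<^sup>+x. (if partial_sum x m \<le> 1 \<and> 1 < partial_sum x (Suc m) then g (partial_sum_prod x (Suc m)) else 0)
             \<partial>PiM {..Suc m} (\<lambda>_. exponential_measure l))
       = (\<integral>\<^sup>+x. indicator {..1} (partial_sum x m) * ennreal (exp (- l * (1 - partial_sum x m)))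
             * g (partial_sum_prod x (Suc m)) \<partial>PiM {..m} (\<lambda>_. exponential_measure l))"
proof -
  interpret product_prob_space "\<lambda>_. exponential_measure l" "{}"
    using l by (rule product_prob_space_exponential_measure)
  have [measurable]:
    "(\<lambda>x. partial_sum x m) \<in> borel_measurable (PiM (insert (Suc m) {..m}) (\<lambda>_. exponential_measure l))"
    "(\<lambda>x. partial_sum x (Suc m)) \<in> borel_measurable (PiM (insert (Suc m) {..m}) (\<lambda>_. exponential_measure l))"
    "(\<lambda>x. partial_sum_prod x (Suc m)) \<in> borel_measurable (PiM (insert (Suc m) {..m}) (\<lambda>_. exponential_measure l))"
    by (auto intro: measurable_partial_sum measurable_partial_sum_prod)
  have "(\<integral>\<^sup>+x. (if partial_sum x m \<le> 1 \<and> 1 < partial_sum x (Suc m) then g (partial_sum_prod x (Suc m)) else 0)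
           \<partial>PiM {..Suc m} (\<lambda>_. exponential_measure l))
      = (\<integral>\<^sup>+x. (\<integral>\<^sup>+y. (if partial_sum (x(Suc m := y)) m \<le> 1 \<and> 1 < partial_sum (x(Suc m := y)) (Suc m)
                 then g (partial_sum_prod (x(Suc m := y)) (Suc m)) else 0) \<partial>exponential_measure l)
           \<partial>PiM {..m} (\<lambda>_. exponential_measure l))"
    unfolding atMost_Suc by (rule product_nn_integral_insert) auto
  also have "\<dots> = (\<integral>\<^sup>+x. (\<integral>\<^sup>+y. indicator {..1} (partial_sum x m) * indicator {1 - partial_sum x m<..} y
             * g (partial_sum_prod x (Suc m)) \<partial>exponential_measure l) \<partial>PiM {..m} (\<lambda>_. exponential_measure l))"
    by (intro nn_integral_cong)
      (auto simp: partial_sum_Suc partial_sum_fun_upd partial_sum_prod_fun_upd split: split_indicator)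
  also have "\<dots> = (\<integral>\<^sup>+x. indicator {..1} (partial_sum x m) * ennreal (exp (- l * (1 - partial_sum x m)))
             * g (partial_sum_prod x (Suc m)) \<partial>PiM {..m} (\<lambda>_. exponential_measure l))"
    using l by (intro nn_integral_cong)
      (auto simp: nn_integral_cmult nn_integral_multc emeasure_exponential_measure_greaterThan
        split: split_indicator)
  finally show ?thesis .
qed

lemma nn_integral_exponential_exceeds_one:
  assumes l: "0 < l" and [measurable]: "g \<in> borel_measurable borel"
  shows "(\<integral>\<^sup>+x. (if 1 < partial_sum x 0 then g (partial_sum_prod x 0) else 0) \<partial>PiM {..0} (\<lambda>_. exponential_measure l))
       = pmf (poisson_pmf l) 0 * (\<integral>\<^sup>+p. g p \<partial>prod_uniform_measure 0)"
proof -
  interpret product_prob_space "\<lambda>_. exponential_measure l" "{}"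
    using l by (rule product_prob_space_exponential_measure)
  have "(\<integral>\<^sup>+x. (if 1 < partial_sum x 0 then g (partial_sum_prod x 0) else 0) \<partial>PiM {..0} (\<lambda>_. exponential_measure l))
      = (\<integral>\<^sup>+x. indicator {1<..} (x 0) * g 1 \<partial>PiM {0::nat} (\<lambda>_. exponential_measure l))"
    unfolding atMost_0 by (intro nn_integral_cong) (simp add: partial_sum_def partial_sum_prod_def)
  also have "\<dots> = (\<integral>\<^sup>+y. indicator {1<..} y * g 1 \<partial>exponential_measure l)"
    by (rule product_nn_integral_singleton[where f = "\<lambda>y. indicator {1<..} y * g 1"]) measurable
  also have "\<dots> = exp (- l) * g 1"
    using l by (simp add: nn_integral_multc emeasure_exponential_measure_greaterThan)
  finally show ?thesis
    using l by (simp add: nn_integral_return)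
qed

text \<open>Only the last partial sum before the crossing is tested, so that the event can be integrated
  out coordinate by coordinate; for nonnegative sequences it is \<^term>\<open>first_passage n\<close>
  by first_passage_iff.\<close>

lemma nn_integral_exponential_first_passage:
  assumes l: "0 < l" and [measurable]: "g \<in> borel_measurable borel"
  shows "(\<integral>\<^sup>+x. (if (n = 0 \<or> partial_sum x (n - 1) \<le> 1) \<and> 1 < partial_sum x n then g (partial_sum_prod x n) else 0)
             \<partial>PiM {..n} (\<lambda>_. exponential_measure l))
       = pmf (poisson_pmf l) n * (\<integral>\<^sup>+p. g p \<partial>prod_uniform_measure n)"
proof (cases n)
  case 0
  show ?thesis
    unfolding 0 using nn_integral_exponential_exceeds_one[OF l, of g] by simp
next
  case (Suc m)
  define \<phi> where "\<phi> s p = indicator {..1} s * ennreal (exp (- l * (1 - s))) * g p" for s p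
  have [measurable]: "case_prod \<phi> \<in> borel_measurable (borel \<Otimes>\<^sub>M borel)"
    unfolding \<phi>_def by measurable
  have "(\<integral>\<^sup>+x. (if partial_sum x m \<le> 1 \<and> 1 < partial_sum x (Suc m) then g (partial_sum_prod x (Suc m)) else 0)
           \<partial>PiM {..Suc m} (\<lambda>_. exponential_measure l))
      = (\<integral>\<^sup>+x. \<phi> (partial_sum x m) (partial_sum_prod x (Suc m)) \<partial>PiM {..m} (\<lambda>_. exponential_measure l))"
    unfolding \<phi>_def using l by (rule nn_integral_exponential_overshoot) measurable
  also have "\<dots> = (\<integral>\<^sup>+t. ennreal (erlang_density m l t) * (\<integral>\<^sup>+p. \<phi> t (t ^ Suc m * p) \<partial>prod_uniform_measure m) \<partial>lborel)"
    using l by (rule nn_integral_exponential_partial_sums) measurable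
  also have "\<dots> = (\<integral>\<^sup>+t. pmf (poisson_pmf l) (Suc m) * (indicator {0..1} t * ennreal (real (Suc m) * t ^ m)
                    * (\<integral>\<^sup>+p. g (t ^ Suc m * p) \<partial>prod_uniform_measure m)) \<partial>lborel)"
  proof (intro nn_integral_cong)
    fix t :: real
    show "ennreal (erlang_density m l t) * (\<integral>\<^sup>+p. \<phi> t (t ^ Suc m * p) \<partial>prod_uniform_measure m)
        = pmf (poisson_pmf l) (Suc m) * (indicator {0..1} t * ennreal (real (Suc m) * t ^ m)
            * (\<integral>\<^sup>+p. g (t ^ Suc m * p) \<partial>prod_uniform_measure m))"
    proof (cases "t \<in> {0..1}")
      case True
      then have "(\<integral>\<^sup>+p. \<phi> t (t ^ Suc m * p) \<partial>prod_uniform_measure m)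
          = ennreal (exp (- l * (1 - t))) * (\<integral>\<^sup>+p. g (t ^ Suc m * p) \<partial>prod_uniform_measure m)"
        unfolding \<phi>_def by (simp add: nn_integral_cmult)
      moreover have "ennreal (erlang_density m l t) * ennreal (exp (- l * (1 - t)))
          = pmf (poisson_pmf l) (Suc m) * ennreal (real (Suc m) * t ^ m)"
        using erlang_density_mult_exp_eq_pmf_poisson[of l t m] True l by (simp add: ennreal_mult'[symmetric])
      ultimately show ?thesis
        using True by (simp add: mult.assoc[symmetric])
    next
      case False
      then consider "t < 0" | "1 < t"
        by fastforce
      then show ?thesis
        by cases (simp_all add: \<phi>_def erlang_density_def)
    qed
  qed
  also have "\<dots> = pmf (poisson_pmf l) (Suc m) * (\<integral>\<^sup>+t. indicator {0..1} t * ennreal (real (Suc m) * t ^ m)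
                    * (\<integral>\<^sup>+p. g (t ^ Suc m * p) \<partial>prod_uniform_measure m) \<partial>lborel)"
    by (rule nn_integral_cmult) measurable
  also have "\<dots> = pmf (poisson_pmf l) (Suc m) * (\<integral>\<^sup>+p. g p \<partial>prod_uniform_measure (Suc m))"
    using nn_integral_prod_uniform_measure_Suc_scaled[of 1 g m] by simp
  finally show ?thesis
    unfolding Suc by simp
qed

section \<open>Independent random variables\<close>

lemma emeasure_distr_eq_nn_integral_indicator:
  "f \<in> measurable M N \<Longrightarrow> A \<in> sets N \<Longrightarrow> emeasure (distr M N f) A = (\<integral>\<^sup>+x. indicator A (f x) \<partial>M)"
  using nn_integral_distr[of f M N "indicator A"] by simp

lemma suminf_ennreal_pmf_nat: "(\<Sum>n. ennreal (pmf p n)) = 1"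
  using nn_integral_pmf[where p = p and A = UNIV] by (simp add: nn_integral_count_space_nat)

lemma (in prob_space) indep_var_nn_integral:
  assumes indep: "indep_var S X T Y"
    and [measurable]: "f \<in> borel_measurable S" "h \<in> borel_measurable T"
  shows "(\<integral>\<^sup>+\<omega>. f (X \<omega>) * h (Y \<omega>) \<partial>M) = (\<integral>\<^sup>+\<omega>. f (X \<omega>) \<partial>M) * (\<integral>\<^sup>+\<omega>. h (Y \<omega>) \<partial>M)"
proof -
  have [measurable]: "X \<in> measurable M S" "Y \<in> measurable M T"
    using indep by (auto dest: indep_var_rv1 indep_var_rv2)
  interpret DX: prob_space "distr M S X"
    by (rule prob_space_distr) measurable
  interpret DY: prob_space "distr M T Y"
    by (rule prob_space_distr) measurable
  interpret DXY: pair_prob_space "distr M S X" "distr M T Y" ..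
  have "(\<integral>\<^sup>+\<omega>. f (X \<omega>) * h (Y \<omega>) \<partial>M) = (\<integral>\<^sup>+z. f (fst z) * h (snd z) \<partial>distr M (S \<Otimes>\<^sub>M T) (\<lambda>\<omega>. (X \<omega>, Y \<omega>)))"
    by (simp add: nn_integral_distr)
  also have "\<dots> = (\<integral>\<^sup>+z. f (fst z) * h (snd z) \<partial>(distr M S X \<Otimes>\<^sub>M distr M T Y))"
    using indep by (simp add: indep_var_distribution_eq)
  also have "\<dots> = (\<integral>\<^sup>+a. (\<integral>\<^sup>+b. f a * h b \<partial>distr M T Y) \<partial>distr M S X)"
    by (subst DY.nn_integral_fst[symmetric]) simp_all
  also have "\<dots> = (\<integral>\<^sup>+a. f a \<partial>distr M S X) * (\<integral>\<^sup>+b. h b \<partial>distr M T Y)"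
    by (simp add: nn_integral_cmult nn_integral_multc)
  finally show ?thesis
    by (simp add: nn_integral_distr)
qed

lemma (in prob_space) indep_var_prod:
  fixes X :: "'i \<Rightarrow> 'a \<Rightarrow> real"
  assumes indep: "indep_vars (\<lambda>_. borel) X I" and "i \<in> I" "J \<subseteq> I" "i \<notin> J"
  shows "indep_var borel (X i) borel (\<lambda>\<omega>. \<Prod>j\<in>J. X j \<omega>)"
proof -
  have "indep_var (PiM {i} (\<lambda>_. borel)) (\<lambda>\<omega>. \<lambda>k\<in>{i}. X k \<omega>) (PiM J (\<lambda>_. borel)) (\<lambda>\<omega>. \<lambda>k\<in>J. X k \<omega>)"
    using assms by (intro indep_var_restrict) auto
  then have "indep_var borel ((\<lambda>y. y i) \<circ> (\<lambda>\<omega>. \<lambda>k\<in>{i}. X k \<omega>)) borel ((\<lambda>y. \<Prod>j\<in>J. y j) \<circ> (\<lambda>\<omega>. \<lambda>k\<in>J. X k \<omega>))"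
    by (rule indep_var_compose) auto
  moreover have "(\<lambda>y. \<Prod>j\<in>J. y j) \<circ> (\<lambda>\<omega>. \<lambda>k\<in>J. X k \<omega>) = (\<lambda>\<omega>. \<Prod>j\<in>J. X j \<omega>)"
    by (auto simp: fun_eq_iff intro: prod.cong)
  ultimately show ?thesis
    by (simp add: comp_def)
qed

lemma (in prob_space) distr_prod_indep_unit_uniform:
  fixes X :: "'i \<Rightarrow> 'a \<Rightarrow> real"
  assumes "finite J" "indep_vars (\<lambda>_. borel) X J" "\<And>j. j \<in> J \<Longrightarrow> distr M borel (X j) = unit_uniform"
  shows "distr M borel (\<lambda>\<omega>. \<Prod>j\<in>J. X j \<omega>) = prod_uniform_measure (card J)"
  using assms
proof (induction J rule: finite_induct)
  case empty
  then show ?case by simp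
next
  case (insert i J)
  have indep: "indep_var borel (X i) borel (\<lambda>\<omega>. \<Prod>j\<in>J. X j \<omega>)"
    using insert by (intro indep_var_prod[where I = "insert i J"]) auto
  have [measurable]: "X i \<in> borel_measurable M" "(\<lambda>\<omega>. \<Prod>j\<in>J. X j \<omega>) \<in> borel_measurable M"
    using indep by (auto dest: indep_var_rv1 indep_var_rv2)
  have IH: "distr M borel (\<lambda>\<omega>. \<Prod>j\<in>J. X j \<omega>) = prod_uniform_measure (card J)"
    using insert by (intro insert.IH) (auto intro: indep_vars_subset)
  have "distr M borel (\<lambda>\<omega>. \<Prod>j\<in>insert i J. X j \<omega>)
      = distr (distr M (borel \<Otimes>\<^sub>M borel) (\<lambda>\<omega>. (X i \<omega>, \<Prod>j\<in>J. X j \<omega>))) borel (\<lambda>(w, p). w * p)"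
    using insert by (subst distr_distr) (simp_all add: comp_def)
  also have "\<dots> = distr (distr M borel (X i) \<Otimes>\<^sub>M distr M borel (\<lambda>\<omega>. \<Prod>j\<in>J. X j \<omega>)) borel (\<lambda>(w, p). w * p)"
    using indep by (simp add: indep_var_distribution_eq)
  also have "\<dots> = prod_uniform_measure (card (insert i J))"
    using insert IH by simp
  finally show ?case .
qed

section \<open>Both sides as Poisson mixtures\<close>

locale iid_exponential = prob_space M for M :: "'a measure" +
  fixes l :: real and E :: "nat \<Rightarrow> 'a \<Rightarrow> real"
  assumes rate_pos: "0 < l"
    and indep: "indep_vars (\<lambda>_. borel) E UNIV"
    and exponential: "\<And>k. distributed M lborel (E k) (exponential_density l)"
begin

lemma measurable_E [measurable]: "E k \<in> borel_measurable M"
  using distributed_measurable[OF exponential] by simp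

lemma measurable_first_passage [measurable]:
  "Measurable.pred M (\<lambda>\<omega>. first_passage n (\<lambda>k. E k \<omega>))"
  "(\<lambda>\<omega>. partial_sum_prod (\<lambda>k. E k \<omega>) n) \<in> borel_measurable M"
  unfolding first_passage_def partial_sum_prod_def partial_sum_def by measurable

lemma distr_E: "distr M borel (E k) = exponential_measure l"
proof -
  have "distr M borel (E k) = distr M lborel (E k)"
    by (rule distr_cong) auto
  also have "\<dots> = exponential_measure l"
    by (rule distributed_distr_eq_density[OF exponential])
  finally show ?thesis .
qed

lemma distr_restrict_E:
  "distr M (PiM {..n} (\<lambda>_. borel)) (\<lambda>\<omega>. \<lambda>k\<in>{..n}. E k \<omega>) = PiM {..n} (\<lambda>_. exponential_measure l)"
proof -
  have "indep_vars (\<lambda>_. borel) E {..n}"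
    using indep by (rule indep_vars_subset) auto
  then have "distr M (PiM {..n} (\<lambda>_. borel)) (\<lambda>\<omega>. \<lambda>k\<in>{..n}. E k \<omega>) = PiM {..n} (\<lambda>k. distr M borel (E k))"
    by (subst (asm) indep_vars_iff_distr_eq_PiM) auto
  then show ?thesis
    by (simp add: distr_E)
qed

lemma AE_nonneg: "AE \<omega> in M. \<forall>k. 0 \<le> E k \<omega>"
proof (subst AE_all_countable, intro allI)
  fix k
  have "AE x in distr M borel (E k). 0 \<le> x"
    unfolding distr_E by (subst AE_density) (auto simp: exponential_density_def not_less)
  then show "AE \<omega> in M. 0 \<le> E k \<omega>"
    by (rule AE_distrD[rotated]) simp
qed

lemma nn_integral_first_passage:
  assumes [measurable]: "g \<in> borel_measurable borel"
  shows "(\<integral>\<^sup>+\<omega>. (if first_passage n (\<lambda>k. E k \<omega>) then g (partial_sum_prod (\<lambda>k. E k \<omega>) n) else 0) \<partial>M)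
       = pmf (poisson_pmf l) n * (\<integral>\<^sup>+p. g p \<partial>prod_uniform_measure n)"
proof -
  define h where "h x = (if (n = 0 \<or> partial_sum x (n - 1) \<le> 1) \<and> 1 < partial_sum x n
                        then g (partial_sum_prod x n) else 0)" for x
  have [measurable]:
    "(\<lambda>x. partial_sum x (n - 1)) \<in> borel_measurable (PiM {..n} (\<lambda>_. borel))"
    "(\<lambda>x. partial_sum x n) \<in> borel_measurable (PiM {..n} (\<lambda>_. borel))"
    "(\<lambda>x. partial_sum_prod x n) \<in> borel_measurable (PiM {..n} (\<lambda>_. borel))"
    by (auto intro: measurable_partial_sum measurable_partial_sum_prod)
  have [measurable]: "h \<in> borel_measurable (PiM {..n} (\<lambda>_. borel))"
    unfolding h_def by measurable
  have "(\<integral>\<^sup>+\<omega>. (if first_passage n (\<lambda>k. E k \<omega>) then g (partial_sum_prod (\<lambda>k. E k \<omega>) n) else 0) \<partial>M)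
      = (\<integral>\<^sup>+\<omega>. h (\<lambda>k\<in>{..n}. E k \<omega>) \<partial>M)"
  proof (rule nn_integral_cong_AE)
    have restrict_sum: "partial_sum (\<lambda>k\<in>{..n}. x k) i = partial_sum x i" if "i \<le> n" for x i
      unfolding partial_sum_def using that by (intro sum.cong) auto
    have restrict_prod: "partial_sum_prod (\<lambda>k\<in>{..n}. x k) n = partial_sum_prod x n" for x
      unfolding partial_sum_prod_def by (intro prod.cong) (auto simp: restrict_sum)
    show "AE \<omega> in M. (if first_passage n (\<lambda>k. E k \<omega>) then g (partial_sum_prod (\<lambda>k. E k \<omega>) n) else 0)
        = h (\<lambda>k\<in>{..n}. E k \<omega>)"
      using AE_nonneg
      by eventually_elim (simp add: h_def first_passage_iff restrict_sum restrict_prod cong: if_cong)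
  qed
  also have "\<dots> = (\<integral>\<^sup>+x. h x \<partial>PiM {..n} (\<lambda>_. exponential_measure l))"
    by (subst distr_restrict_E[symmetric]) (simp add: nn_integral_distr)
  also have "\<dots> = pmf (poisson_pmf l) n * (\<integral>\<^sup>+p. g p \<partial>prod_uniform_measure n)"
    unfolding h_def using rate_pos by (rule nn_integral_exponential_first_passage) measurable
  finally show ?thesis .
qed

text \<open>No law of large numbers is needed here: the first-passage events carry the Poisson
  masses, and these already sum to 1.\<close>

lemma AE_ex_first_passage: "AE \<omega> in M. \<exists>n. first_passage n (\<lambda>k. E k \<omega>)"
proof -
  define A where "A n = {\<omega>\<in>space M. first_passage n (\<lambda>k. E k \<omega>)}" for n
  have A_sets [measurable]: "A n \<in> sets M" for n
    unfolding A_def by measurable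
  have "emeasure M (A n) = pmf (poisson_pmf l) n" for n
  proof -
    interpret U: prob_space "prod_uniform_measure n"
      by (rule prob_space_prod_uniform_measure)
    have "emeasure M (A n) = (\<integral>\<^sup>+\<omega>. indicator (A n) \<omega> \<partial>M)"
      by simp
    also have "\<dots> = (\<integral>\<^sup>+\<omega>. (if first_passage n (\<lambda>k. E k \<omega>) then 1 else 0) \<partial>M)"
      by (intro nn_integral_cong) (simp add: A_def)
    also have "\<dots> = pmf (poisson_pmf l) n * (\<integral>\<^sup>+p. 1 \<partial>prod_uniform_measure n)"
      using nn_integral_first_passage[of "\<lambda>_. 1" n] by simp
    finally show ?thesis
      using U.emeasure_space_1 by simp
  qed
  moreover have "disjoint_family A"
    unfolding disjoint_family_on_def A_def using first_passage_unique by blast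
  then have "(\<Sum>n. emeasure M (A n)) = emeasure M (\<Union>n. A n)"
    by (intro suminf_emeasure) auto
  ultimately have "emeasure M (\<Union>n. A n) = 1"
    by (simp add: suminf_ennreal_pmf_nat)
  moreover have "(\<Union>n. A n) = {\<omega>\<in>space M. \<exists>n. first_passage n (\<lambda>k. E k \<omega>)}"
    by (auto simp: A_def)
  ultimately show ?thesis
    by (subst prob_Collect_eq_1[symmetric]) (auto simp: emeasure_eq_measure)
qed

lemma nn_integral_prod_min_partial_sums:
  assumes [measurable]: "g \<in> borel_measurable borel"
  shows "(\<integral>\<^sup>+\<omega>. g (prod_min_partial_sums (\<lambda>k. E k \<omega>)) \<partial>M)
       = (\<Sum>n. pmf (poisson_pmf l) n * (\<integral>\<^sup>+p. g p \<partial>prod_uniform_measure n))"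
proof -
  have "AE \<omega> in M. g (prod_min_partial_sums (\<lambda>k. E k \<omega>))
      = (\<Sum>n. (if first_passage n (\<lambda>k. E k \<omega>) then g (partial_sum_prod (\<lambda>k. E k \<omega>) n) else 0))"
    using AE_nonneg AE_ex_first_passage
  proof eventually_elim
    case (elim \<omega>)
    then obtain m where m: "first_passage m (\<lambda>k. E k \<omega>)"
      by blast
    have "(\<lambda>n. if first_passage n (\<lambda>k. E k \<omega>) then g (partial_sum_prod (\<lambda>k. E k \<omega>) n) else 0)
        = (\<lambda>n. if n = m then g (partial_sum_prod (\<lambda>k. E k \<omega>) n) else 0)"
      using m first_passage_unique by fastforce
    also have "\<dots> sums g (partial_sum_prod (\<lambda>k. E k \<omega>) m)"
      by (rule sums_single)
    also have "partial_sum_prod (\<lambda>k. E k \<omega>) m = prod_min_partial_sums (\<lambda>k. E k \<omega>)"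
      using elim m by (simp add: prod_min_partial_sums_first_passage)
    finally show ?case
      by (simp add: sums_iff)
  qed
  then have "(\<integral>\<^sup>+\<omega>. g (prod_min_partial_sums (\<lambda>k. E k \<omega>)) \<partial>M)
      = (\<integral>\<^sup>+\<omega>. (\<Sum>n. (if first_passage n (\<lambda>k. E k \<omega>) then g (partial_sum_prod (\<lambda>k. E k \<omega>) n) else 0)) \<partial>M)"
    by (rule nn_integral_cong_AE)
  also have "\<dots> = (\<Sum>n. (\<integral>\<^sup>+\<omega>. (if first_passage n (\<lambda>k. E k \<omega>) then g (partial_sum_prod (\<lambda>k. E k \<omega>) n) else 0) \<partial>M))"
    by (rule nn_integral_suminf) measurable
  also have "\<dots> = (\<Sum>n. pmf (poisson_pmf l) n * (\<integral>\<^sup>+p. g p \<partial>prod_uniform_measure n))"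
    by (simp add: nn_integral_first_passage)
  finally show ?thesis .
qed

end

locale poisson_uniform_product = prob_space M for M :: "'a measure" +
  fixes l :: real and N :: "'a \<Rightarrow> nat" and U :: "nat \<Rightarrow> 'a \<Rightarrow> real"
  assumes measurable_N [measurable]: "N \<in> measurable M (count_space UNIV)"
    and distr_N: "distr M (count_space UNIV) N = measure_pmf (poisson_pmf l)"
    and measurable_U [measurable]: "\<And>i. U i \<in> borel_measurable M"
    and distr_U: "\<And>i. distr M borel (U i) = unit_uniform"
    and indep: "indep_vars (\<lambda>_. borel) (\<lambda>j \<omega>. case j of None \<Rightarrow> real (N \<omega>) | Some i \<Rightarrow> U i \<omega>) UNIV"
begin

lemma nn_integral_N_eq:
  assumes [measurable]: "g \<in> borel_measurable borel"
  shows "(\<integral>\<^sup>+\<omega>. (if N \<omega> = n then g (\<Prod>i<n. U i \<omega>) else 0) \<partial>M)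
       = pmf (poisson_pmf l) n * (\<integral>\<^sup>+p. g p \<partial>prod_uniform_measure n)"
proof -
  define Y where "Y = (\<lambda>j \<omega>. case j of None \<Rightarrow> real (N \<omega>) | Some i \<Rightarrow> U i \<omega>)"
  have indep_Y: "indep_vars (\<lambda>_. borel) Y UNIV"
    using indep by (simp add: Y_def)
  have [measurable]: "Y j \<in> borel_measurable M" for j
    by (cases j) (simp_all add: Y_def)
  define J where "J = Some ` {..<n}"
  have prod_eq: "(\<Prod>i<n. U i \<omega>) = (\<Prod>j\<in>J. Y j \<omega>)" for \<omega>
    unfolding J_def Y_def by (simp add: prod.reindex)
  have "indep_var borel (Y None) borel (\<lambda>\<omega>. \<Prod>j\<in>J. Y j \<omega>)"
    using indep_Y by (rule indep_var_prod) (auto simp: J_def)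
  then have "(\<integral>\<^sup>+\<omega>. indicator {real n} (Y None \<omega>) * g (\<Prod>j\<in>J. Y j \<omega>) \<partial>M)
      = (\<integral>\<^sup>+\<omega>. indicator {real n} (Y None \<omega>) \<partial>M) * (\<integral>\<^sup>+\<omega>. g (\<Prod>j\<in>J. Y j \<omega>) \<partial>M)"
    by (rule indep_var_nn_integral) measurable
  moreover have "(\<integral>\<^sup>+\<omega>. (if N \<omega> = n then g (\<Prod>i<n. U i \<omega>) else 0) \<partial>M)
      = (\<integral>\<^sup>+\<omega>. indicator {real n} (Y None \<omega>) * g (\<Prod>j\<in>J. Y j \<omega>) \<partial>M)"
    by (intro nn_integral_cong) (simp add: Y_def prod_eq)
  moreover have "(\<integral>\<^sup>+\<omega>. indicator {real n} (Y None \<omega>) \<partial>M) = pmf (poisson_pmf l) n"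
  proof -
    have "(\<integral>\<^sup>+\<omega>. indicator {real n} (Y None \<omega>) \<partial>M) = (\<integral>\<^sup>+k. indicator {n} k \<partial>distr M (count_space UNIV) N)"
      by (subst nn_integral_distr) (auto simp: Y_def intro!: nn_integral_cong split: split_indicator)
    then show ?thesis
      by (simp add: distr_N emeasure_pmf_single)
  qed
  moreover have "(\<integral>\<^sup>+\<omega>. g (\<Prod>j\<in>J. Y j \<omega>) \<partial>M) = (\<integral>\<^sup>+p. g p \<partial>prod_uniform_measure n)"
  proof -
    have "distr M borel (\<lambda>\<omega>. \<Prod>j\<in>J. Y j \<omega>) = prod_uniform_measure (card J)"
    proof (rule distr_prod_indep_unit_uniform)
      show "indep_vars (\<lambda>_. borel) Y J"
        using indep_Y by (rule indep_vars_subset) simp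
    qed (auto simp: J_def Y_def distr_U)
    moreover have "card J = n"
      by (simp add: J_def card_image)
    ultimately show ?thesis
      using nn_integral_distr[of "\<lambda>\<omega>. \<Prod>j\<in>J. Y j \<omega>" M borel g] by simp
  qed
  ultimately show ?thesis
    by simp
qed

lemma nn_integral_prod_U:
  assumes [measurable]: "g \<in> borel_measurable borel"
  shows "(\<integral>\<^sup>+\<omega>. g (\<Prod>i<N \<omega>. U i \<omega>) \<partial>M)
       = (\<Sum>n. pmf (poisson_pmf l) n * (\<integral>\<^sup>+p. g p \<partial>prod_uniform_measure n))"
proof -
  have "g (\<Prod>i<N \<omega>. U i \<omega>) = (\<Sum>n. if N \<omega> = n then g (\<Prod>i<n. U i \<omega>) else 0)" for \<omega>
    using sums_single[of "N \<omega>" "\<lambda>n. g (\<Prod>i<n. U i \<omega>)"] by (simp add: sums_iff eq_commute)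
  then have "(\<integral>\<^sup>+\<omega>. g (\<Prod>i<N \<omega>. U i \<omega>) \<partial>M)
      = (\<Sum>n. \<integral>\<^sup>+\<omega>. (if N \<omega> = n then g (\<Prod>i<n. U i \<omega>) else 0) \<partial>M)"
    by (simp add: nn_integral_suminf)
  then show ?thesis
    by (simp add: nn_integral_N_eq)
qed

end

theorem lemma1:
  fixes M :: "'a measure" and M' :: "'b measure"
    and l :: real
    and E :: "nat \<Rightarrow> 'a \<Rightarrow> real"
    and N :: "'b \<Rightarrow> nat" and U :: "nat \<Rightarrow> 'b \<Rightarrow> real"
  assumes "0 < l"
    and "prob_space M"
    and "prob_space.indep_vars M (\<lambda>_. borel) E UNIV"
    and "\<And>k. distributed M lborel (E k) (exponential_density l)"
    and "prob_space M'"
    and "N \<in> measurable M' (count_space UNIV)"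
    and "distr M' (count_space UNIV) N = measure_pmf (poisson_pmf l)"
    and "\<And>i. U i \<in> borel_measurable M'"
    and "\<And>i. distr M' borel (U i) = uniform_measure lborel {0<..<1}"
    and "prob_space.indep_vars M' (\<lambda>_. borel)
           (\<lambda>j \<omega>. case j of None \<Rightarrow> real (N \<omega>) | Some i \<Rightarrow> U i \<omega>) UNIV"
  shows "distr M borel (\<lambda>\<omega>. prod_min_partial_sums (\<lambda>k. E k \<omega>))
       = distr M' borel (\<lambda>\<omega>. \<Prod>i<N \<omega>. U i \<omega>)"
proof -
  interpret L: iid_exponential M l E
    using assms(1-4) by (simp add: iid_exponential_def iid_exponential_axioms_def)
  interpret R: poisson_uniform_product M' l N U
    using assms(5-10) by (simp add: poisson_uniform_product_def poisson_uniform_product_axioms_def)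
  have [measurable]: "(\<lambda>\<omega>. prod_min_partial_sums (\<lambda>k. E k \<omega>)) \<in> borel_measurable M"
    unfolding prod_min_partial_sums_def by measurable
  have [measurable]: "(\<lambda>\<omega>. \<Prod>i<N \<omega>. U i \<omega>) \<in> borel_measurable M'"
    by (rule measurable_compose_countable[where f = "\<lambda>n \<omega>. \<Prod>i<n. U i \<omega>"]) measurable
  show ?thesis
  proof (rule measure_eqI)
    fix A :: "real set"
    assume "A \<in> sets (distr M borel (\<lambda>\<omega>. prod_min_partial_sums (\<lambda>k. E k \<omega>)))"
    then have [measurable]: "A \<in> sets borel"
      by simp
    have "emeasure (distr M borel (\<lambda>\<omega>. prod_min_partial_sums (\<lambda>k. E k \<omega>))) A
        = (\<integral>\<^sup>+\<omega>. indicator A (prod_min_partial_sums (\<lambda>k. E k \<omega>)) \<partial>M)"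
      by (simp add: emeasure_distr_eq_nn_integral_indicator)
    also have "\<dots> = (\<integral>\<^sup>+\<omega>. indicator A (\<Prod>i<N \<omega>. U i \<omega>) \<partial>M')"
      by (simp add: L.nn_integral_prod_min_partial_sums R.nn_integral_prod_U)
    also have "\<dots> = emeasure (distr M' borel (\<lambda>\<omega>. \<Prod>i<N \<omega>. U i \<omega>)) A"
      by (simp add: emeasure_distr_eq_nn_integral_indicator)
    finally show "emeasure (distr M borel (\<lambda>\<omega>. prod_min_partial_sums (\<lambda>k. E k \<omega>))) A
        = emeasure (distr M' borel (\<lambda>\<omega>. \<Prod>i<N \<omega>. U i \<omega>)) A" .
  qed simp
qed

end
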